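(* $\mathbf{V}_{\mathcal{D}}=\mathbf{V}_{\mathcal{L}}\vee\mathbf{V}_{\mathcal{R}}$, the join being taken in the lattice of subvarieties of the variety of idempotent semirings.
   Context: An idempotent semiring is an algebra $(S,+,\cdot)$ with $(S,+)$, $(S,\cdot)$ bands and both distributive laws; addition not assumed commutative. $\mathbf{V}_{\mathcal{D}}$, $\mathbf{V}_{\mathcal{L}}$, $\mathbf{V}_{\mathcal{R}}$ denote the varieties of idempotent semirings satisfying $x\approx xyx+x+xyx$, $x\approx xy+x+xy$, $x\approx yx+x+yx$ respectively (equivalently, those on which the Green's relation $\mathcal{D}^{\bullet}$, resp. $\mathcal{L}^{\bullet}$, $\mathcal{R}^{\bullet}$, is the least distributive lattice congruence). The join of two varieties is the smallest variety containing both. *)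

theory Defs
  imports Main
begin

datatype sterm = Var nat | Add sterm sterm | Mul sterm sterm

fun eval :: "('a \<Rightarrow> 'a \<Rightarrow> 'a) \<Rightarrow> ('a \<Rightarrow> 'a \<Rightarrow> 'a) \<Rightarrow> (nat \<Rightarrow> 'a) \<Rightarrow> sterm \<Rightarrow> 'a" where
  "eval p m v (Var i) = v i"
| "eval p m v (Add s t) = p (eval p m v s) (eval p m v t)"
| "eval p m v (Mul s t) = m (eval p m v s) (eval p m v t)"

type_synonym 'a alg = "'a set \<times> ('a \<Rightarrow> 'a \<Rightarrow> 'a) \<times> ('a \<Rightarrow> 'a \<Rightarrow> 'a)"

definition alg_closed :: "'a alg \<Rightarrow> bool" where
  "alg_closed S \<longleftrightarrow> (case S of (A, p, m) \<Rightarrow>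
     (\<forall>x\<in>A. \<forall>y\<in>A. p x y \<in> A \<and> m x y \<in> A))"

definition sat :: "'a alg \<Rightarrow> sterm \<times> sterm \<Rightarrow> bool" where
  "sat S e \<longleftrightarrow> (case S of (A, p, m) \<Rightarrow>
     (\<forall>v. (\<forall>i. v i \<in> A) \<longrightarrow> eval p m v (fst e) = eval p m v (snd e)))"

text \<open>Idempotent semiring: (S,+) and (S,*) bands, both distributive laws;
  addition not assumed commutative.\<close>
definition idem_semiring :: "'a alg \<Rightarrow> bool" where
  "idem_semiring S \<longleftrightarrow> alg_closed S \<and> (case S of (A, p, m) \<Rightarrow>
     (\<forall>x\<in>A. \<forall>y\<in>A. \<forall>z\<in>A.
        p (p x y) z = p x (p y z) \<and> m (m x y) z = m x (m y z) \<and>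
        p x x = x \<and> m x x = x \<and>
        m x (p y z) = p (m x y) (m x z) \<and> m (p x y) z = p (m x z) (m y z)))"

definition VD :: "'a alg \<Rightarrow> bool" where
  "VD S \<longleftrightarrow> idem_semiring S \<and> (case S of (A, p, m) \<Rightarrow>
     (\<forall>x\<in>A. \<forall>y\<in>A. x = p (p (m (m x y) x) x) (m (m x y) x)))"

definition VL :: "'a alg \<Rightarrow> bool" where
  "VL S \<longleftrightarrow> idem_semiring S \<and> (case S of (A, p, m) \<Rightarrow>
     (\<forall>x\<in>A. \<forall>y\<in>A. x = p (p (m x y) x) (m x y)))"

definition VR :: "'a alg \<Rightarrow> bool" where
  "VR S \<longleftrightarrow> idem_semiring S \<and> (case S of (A, p, m) \<Rightarrow>
     (\<forall>x\<in>A. \<forall>y\<in>A. x = p (p (m y x) x) (m y x)))"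

text \<open>Equational theory of a class of algebras, computed over algebras whose
  carrier is a subset of nat (this suffices, since relatively free algebras
  on countably many generators are countable).\<close>
definition eq_theory :: "(nat alg \<Rightarrow> bool) \<Rightarrow> (sterm \<times> sterm) set" where
  "eq_theory K = {e. \<forall>S. K S \<longrightarrow> sat S e}"

text \<open>Join of two varieties: the variety defined by the common identities,
  i.e. the smallest variety containing both.\<close>
definition join_variety :: "(nat alg \<Rightarrow> bool) \<Rightarrow> (nat alg \<Rightarrow> bool) \<Rightarrow> 'a alg \<Rightarrow> bool" where
  "join_variety K1 K2 S \<longleftrightarrow> alg_closed S \<and> (\<forall>e \<in> eq_theory K1 \<inter> eq_theory K2. sat S e)"

end

theory Submission
  imports Defs "HOL-Library.Countable_Set"
begin

text \<open>
  \<open>V\<^sub>L\<close> and \<open>V\<^sub>R\<close> are contained in \<open>V\<^sub>D\<close> by substituting \<open>yx\<close>, resp. \<open>xy\<close>, for \<open>y\<close> in their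
  defining identities. Conversely, \<open>V\<^sub>D\<close> is equivalent to the absorption laws
  \<open>x + xyx = x = xyx + x\<close>, and these force \<open>ax = bx\<close> for all \<open>x\<close> whenever \<open>a\<close> and \<open>b\<close> are
  \<open>\<R>\<close>-related in the multiplicative band (\<open>ab = b\<close>, \<open>ba = a\<close>). Hence \<open>\<R>\<close> is the kernel of
  the left regular representation, a semiring congruence, and the quotient by it satisfies
  \<open>x = xy + x + xy\<close>, i.e. lies in \<open>V\<^sub>L\<close>; dually the quotient by \<open>\<L>\<close> lies in \<open>V\<^sub>R\<close>. Since
  \<open>\<R> \<inter> \<L>\<close> is trivial in a band, every member of \<open>V\<^sub>D\<close> is a subdirect product of a member of
  \<open>V\<^sub>L\<close> and a member of \<open>V\<^sub>R\<close>, so it satisfies every identity common to both.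
\<close>

section \<open>Terms and identities\<close>

fun vars :: "sterm \<Rightarrow> nat set" where
  "vars (Var i) = {i}"
| "vars (Add s t) = vars s \<union> vars t"
| "vars (Mul s t) = vars s \<union> vars t"

lemma eval_cong: "(\<And>i. i \<in> vars t \<Longrightarrow> v i = w i) \<Longrightarrow> eval p m v t = eval p m w t"
  by (induction t) auto

lemma eval_closed: "alg_closed (B, p, m) \<Longrightarrow> range w \<subseteq> B \<Longrightarrow> eval p m w t \<in> B"
  by (induction t) (auto simp: alg_closed_def)

lemma alg_closed_range_eval: "alg_closed (range (eval p m v), p, m)"
  unfolding alg_closed_def by (auto intro: range_eqI[of _ _ "Add _ _"] range_eqI[of _ _ "Mul _ _"])

instance sterm :: countable
  by countable_datatype

definition models :: "(sterm \<times> sterm) set \<Rightarrow> 'a alg \<Rightarrow> bool" where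
  "models E S \<longleftrightarrow> alg_closed S \<and> (\<forall>e\<in>E. sat S e)"

lemma sat_three_vars:
  assumes "vars s \<union> vars t \<subseteq> {0, 1, 2}"
  shows "sat (A, p, m) (s, t) \<longleftrightarrow> (\<forall>x\<in>A. \<forall>y\<in>A. \<forall>z\<in>A.
           eval p m (\<lambda>i. if i = 0 then x else if i = 1 then y else z) s =
           eval p m (\<lambda>i. if i = 0 then x else if i = 1 then y else z) t)"
  (is "_ \<longleftrightarrow> (\<forall>x\<in>A. \<forall>y\<in>A. \<forall>z\<in>A. eval p m (?v x y z) s = eval p m (?v x y z) t)")
proof
  assume "sat (A, p, m) (s, t)"
  then show "\<forall>x\<in>A. \<forall>y\<in>A. \<forall>z\<in>A. eval p m (?v x y z) s = eval p m (?v x y z) t"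
    by (auto simp: sat_def)
next
  assume H: "\<forall>x\<in>A. \<forall>y\<in>A. \<forall>z\<in>A. eval p m (?v x y z) s = eval p m (?v x y z) t"
  show "sat (A, p, m) (s, t)" unfolding sat_def prod.case
  proof (intro allI impI)
    fix w :: "nat \<Rightarrow> _" assume "\<forall>i. w i \<in> A"
    moreover have "eval p m w u = eval p m (?v (w 0) (w 1) (w 2)) u" if "vars u \<subseteq> {0, 1, 2}" for u
      using that by (intro eval_cong) auto
    ultimately show "eval p m w (fst (s, t)) = eval p m w (snd (s, t))"
      using H assms by simp
  qed
qed

definition semiring_laws :: "(sterm \<times> sterm) set" where
  "semiring_laws =
    {(Add (Add (Var 0) (Var 1)) (Var 2), Add (Var 0) (Add (Var 1) (Var 2))),
     (Mul (Mul (Var 0) (Var 1)) (Var 2), Mul (Var 0) (Mul (Var 1) (Var 2))),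
     (Add (Var 0) (Var 0), Var 0),
     (Mul (Var 0) (Var 0), Var 0),
     (Mul (Var 0) (Add (Var 1) (Var 2)), Add (Mul (Var 0) (Var 1)) (Mul (Var 0) (Var 2))),
     (Mul (Add (Var 0) (Var 1)) (Var 2), Add (Mul (Var 0) (Var 2)) (Mul (Var 1) (Var 2)))}"

definition VD_law :: "sterm \<times> sterm" where
  "VD_law = (Var 0, Add (Add (Mul (Mul (Var 0) (Var 1)) (Var 0)) (Var 0)) (Mul (Mul (Var 0) (Var 1)) (Var 0)))"

definition VL_law :: "sterm \<times> sterm" where
  "VL_law = (Var 0, Add (Add (Mul (Var 0) (Var 1)) (Var 0)) (Mul (Var 0) (Var 1)))"

definition VR_law :: "sterm \<times> sterm" where
  "VR_law = (Var 0, Add (Add (Mul (Var 1) (Var 0)) (Var 0)) (Mul (Var 1) (Var 0)))"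

lemma idem_semiring_iff_models: "idem_semiring S \<longleftrightarrow> models semiring_laws S"
proof (cases S)
  case (fields A p m)
  then show ?thesis
    unfolding models_def semiring_laws_def idem_semiring_def
    by (auto simp: sat_three_vars)
qed

lemma VD_iff_models: "VD S \<longleftrightarrow> models (insert VD_law semiring_laws) S"
proof (cases S)
  case (fields A p m)
  then show ?thesis
    using idem_semiring_iff_models[of S]
    by (auto simp: VD_def VD_law_def models_def sat_three_vars)
qed

lemma VL_iff_models: "VL S \<longleftrightarrow> models (insert VL_law semiring_laws) S"
proof (cases S)
  case (fields A p m)
  then show ?thesis
    using idem_semiring_iff_models[of S]
    by (auto simp: VL_def VL_law_def models_def sat_three_vars)
qed

lemma VR_iff_models: "VR S \<longleftrightarrow> models (insert VR_law semiring_laws) S"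
proof (cases S)
  case (fields A p m)
  then show ?thesis
    using idem_semiring_iff_models[of S]
    by (auto simp: VR_def VR_law_def models_def sat_three_vars)
qed

section \<open>Homomorphic images and quotients\<close>

lemma
  assumes closed: "alg_closed (B, p, m)"
    and hom: "\<And>x y. x \<in> B \<Longrightarrow> y \<in> B \<Longrightarrow> f (p x y) = P (f x) (f y) \<and> f (m x y) = M (f x) (f y)"
  shows alg_closed_hom_image: "alg_closed (f ` B, P, M)"
    and sat_hom_image_iff: "sat (f ` B, P, M) e \<longleftrightarrow>
           (\<forall>w. range w \<subseteq> B \<longrightarrow> f (eval p m w (fst e)) = f (eval p m w (snd e)))"
proof -
  have eval_hom: "eval P M (f \<circ> w) t = f (eval p m w t)" if "range w \<subseteq> B" for w t
    using that by (induction t) (auto simp: hom eval_closed[OF closed])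
  show "alg_closed (f ` B, P, M)"
    using closed by (auto simp: alg_closed_def simp flip: hom)
  show "sat (f ` B, P, M) e \<longleftrightarrow>
          (\<forall>w. range w \<subseteq> B \<longrightarrow> f (eval p m w (fst e)) = f (eval p m w (snd e)))"
  proof
    assume sat: "sat (f ` B, P, M) e"
    show "\<forall>w. range w \<subseteq> B \<longrightarrow> f (eval p m w (fst e)) = f (eval p m w (snd e))"
    proof (intro allI impI)
      fix w :: "nat \<Rightarrow> _" assume w: "range w \<subseteq> B"
      then have "\<forall>i. (f \<circ> w) i \<in> f ` B" by auto
      with sat have "eval P M (f \<circ> w) (fst e) = eval P M (f \<circ> w) (snd e)" by (simp add: sat_def)
      with w show "f (eval p m w (fst e)) = f (eval p m w (snd e))" by (simp add: eval_hom)
    qed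
  next
    assume H: "\<forall>w. range w \<subseteq> B \<longrightarrow> f (eval p m w (fst e)) = f (eval p m w (snd e))"
    show "sat (f ` B, P, M) e" unfolding sat_def prod.case
    proof (intro allI impI)
      fix u :: "nat \<Rightarrow> _" assume "\<forall>i. u i \<in> f ` B"
      then have "range (inv_into B f \<circ> u) \<subseteq> B" and "u = f \<circ> (inv_into B f \<circ> u)"
        by (auto simp: inv_into_into f_inv_into_f)
      then show "eval P M u (fst e) = eval P M u (snd e)"
        using H eval_hom by metis
    qed
  qed
qed

definition congruence :: "'a set \<Rightarrow> ('a \<Rightarrow> 'a \<Rightarrow> 'a) \<Rightarrow> ('a \<Rightarrow> 'a \<Rightarrow> 'a) \<Rightarrow> 'a rel \<Rightarrow> bool" where
  "congruence B p m E \<longleftrightarrow> equiv B E \<and>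
     (\<forall>(x, x') \<in> E. \<forall>(y, y') \<in> E. (p x y, p x' y') \<in> E \<and> (m x y, m x' y') \<in> E)"

text \<open>\<open>eq_theory\<close> only quantifies over algebras on \<open>nat\<close>, so a quotient is transported
  there by numbering its classes.\<close>
lemma countable_quotient_on_nat:
  assumes "countable B" and closed: "alg_closed (B, p, m)" and cong: "congruence B p m E"
  obtains N :: "nat alg" where "alg_closed N"
    and "\<And>e. sat N e \<longleftrightarrow> (\<forall>w. range w \<subseteq> B \<longrightarrow> (eval p m w (fst e), eval p m w (snd e)) \<in> E)"
proof -
  have equiv: "equiv B E" using cong by (simp add: congruence_def)
  define f where "f x = to_nat_on (B // E) (E `` {x})" for x
  have "countable (B // E)"
    using \<open>countable B\<close> by (simp add: quotient_def)
  then have f_eq_iff: "f x = f y \<longleftrightarrow> (x, y) \<in> E" if "x \<in> B" "y \<in> B" for x y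
    using that equiv by (simp add: f_def quotientI eq_equiv_class_iff)
  define g where "g = inv_into B f"
  have g: "g (f x) \<in> B" "(x, g (f x)) \<in> E" if "x \<in> B" for x
    using that f_eq_iff[of x "g (f x)"] by (auto simp: g_def inv_into_into f_inv_into_f)
  define P where "P i j = f (p (g i) (g j))" for i j
  define M where "M i j = f (m (g i) (g j))" for i j
  have hom: "f (p x y) = P (f x) (f y) \<and> f (m x y) = M (f x) (f y)" if "x \<in> B" "y \<in> B" for x y
  proof -
    have "(p x y, p (g (f x)) (g (f y))) \<in> E" "(m x y, m (g (f x)) (g (f y))) \<in> E"
      using cong g[OF that(1)] g[OF that(2)] by (auto simp: congruence_def)
    then show ?thesis
      using that g closed by (auto simp: P_def M_def alg_closed_def f_eq_iff)
  qed
  show thesis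
  proof
    show "alg_closed (f ` B, P, M)" using closed hom by (rule alg_closed_hom_image)
    show "sat (f ` B, P, M) e \<longleftrightarrow> (\<forall>w. range w \<subseteq> B \<longrightarrow> (eval p m w (fst e), eval p m w (snd e)) \<in> E)" for e
      using closed hom by (simp add: sat_hom_image_iff f_eq_iff eval_closed)
  qed
qed

lemma eq_theory_modulo_congruence:
  fixes K :: "nat alg \<Rightarrow> bool"
  assumes K: "\<And>N. models Laws N \<Longrightarrow> K N"
    and "countable B" "alg_closed (B, p, m)" "congruence B p m E"
    and laws: "\<And>e w. e \<in> Laws \<Longrightarrow> range w \<subseteq> B \<Longrightarrow> (eval p m w (fst e), eval p m w (snd e)) \<in> E"
    and "e \<in> eq_theory K" "range w \<subseteq> B"
  shows "(eval p m w (fst e), eval p m w (snd e)) \<in> E"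
proof -
  obtain N :: "nat alg" where "alg_closed N"
    and sat_N: "\<And>e. sat N e \<longleftrightarrow> (\<forall>w. range w \<subseteq> B \<longrightarrow> (eval p m w (fst e), eval p m w (snd e)) \<in> E)"
    using countable_quotient_on_nat assms(2-4) by blast
  with laws sat_N have "models Laws N" by (auto simp: models_def)
  then have "K N" by (rule K)
  with \<open>e \<in> eq_theory K\<close> have "sat N e" unfolding eq_theory_def by blast
  with sat_N \<open>range w \<subseteq> B\<close> show ?thesis by blast
qed

section \<open>Green's relations in \<open>V\<^sub>D\<close>\<close>

definition green_R :: "'a set \<Rightarrow> ('a \<Rightarrow> 'a \<Rightarrow> 'a) \<Rightarrow> 'a rel" where
  "green_R B m = {(x, y). x \<in> B \<and> y \<in> B \<and> m x y = y \<and> m y x = x}"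

definition green_L :: "'a set \<Rightarrow> ('a \<Rightarrow> 'a \<Rightarrow> 'a) \<Rightarrow> 'a rel" where
  "green_L B m = {(x, y). x \<in> B \<and> y \<in> B \<and> m x y = x \<and> m y x = y}"

lemma green_R_Int_green_L: "green_R B m \<inter> green_L B m \<subseteq> Id"
  by (auto simp: green_R_def green_L_def)

locale VD_semiring =
  fixes A :: "'a set"
    and add :: "'a \<Rightarrow> 'a \<Rightarrow> 'a" (infixl "\<oplus>" 65)
    and mul :: "'a \<Rightarrow> 'a \<Rightarrow> 'a" (infixl "\<odot>" 70)
  assumes VD: "VD (A, add, mul)"
begin

lemma add_closed [simp]: "x \<in> A \<Longrightarrow> y \<in> A \<Longrightarrow> x \<oplus> y \<in> A"
  and mul_closed [simp]: "x \<in> A \<Longrightarrow> y \<in> A \<Longrightarrow> x \<odot> y \<in> A"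
  using VD by (auto simp: VD_def idem_semiring_def alg_closed_def)

lemma add_assoc [simp]: "x \<in> A \<Longrightarrow> y \<in> A \<Longrightarrow> z \<in> A \<Longrightarrow> x \<oplus> y \<oplus> z = x \<oplus> (y \<oplus> z)"
  and mul_assoc [simp]: "x \<in> A \<Longrightarrow> y \<in> A \<Longrightarrow> z \<in> A \<Longrightarrow> x \<odot> y \<odot> z = x \<odot> (y \<odot> z)"
  and add_idem [simp]: "x \<in> A \<Longrightarrow> x \<oplus> x = x"
  and mul_idem [simp]: "x \<in> A \<Longrightarrow> x \<odot> x = x"
  and distrib_left: "x \<in> A \<Longrightarrow> y \<in> A \<Longrightarrow> z \<in> A \<Longrightarrow> x \<odot> (y \<oplus> z) = x \<odot> y \<oplus> x \<odot> z"
  and distrib_right: "x \<in> A \<Longrightarrow> y \<in> A \<Longrightarrow> z \<in> A \<Longrightarrow> (x \<oplus> y) \<odot> z = x \<odot> z \<oplus> y \<odot> z"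
  using VD by (auto simp: VD_def idem_semiring_def)

lemma mul_left_idem [simp]: "x \<in> A \<Longrightarrow> y \<in> A \<Longrightarrow> x \<odot> (x \<odot> y) = x \<odot> y"
  by (metis mul_assoc mul_idem)

lemma mul_idem_assoc [simp]: "x \<in> A \<Longrightarrow> y \<in> A \<Longrightarrow> x \<odot> (y \<odot> (x \<odot> y)) = x \<odot> y"
  by (metis mul_assoc mul_closed mul_idem)

lemma add_left_idem [simp]: "x \<in> A \<Longrightarrow> y \<in> A \<Longrightarrow> x \<oplus> (x \<oplus> y) = x \<oplus> y"
  by (metis add_assoc add_idem)

lemma absorb:
  assumes "x \<in> A" "y \<in> A"
  shows absorb_left: "x \<oplus> x \<odot> (y \<odot> x) = x" and absorb_right: "x \<odot> (y \<odot> x) \<oplus> x = x"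
proof -
  let ?u = "x \<odot> (y \<odot> x)"
  have u: "?u \<in> A" and vd: "?u \<oplus> (x \<oplus> ?u) = x"
    using VD assms by (auto simp: VD_def)
  have "x \<oplus> ?u = (?u \<oplus> (x \<oplus> ?u)) \<oplus> ?u" by (simp only: vd)
  also have "\<dots> = ?u \<oplus> (x \<oplus> ?u)" using u assms by simp
  finally show "x \<oplus> ?u = x" using vd by simp
  have "?u \<oplus> x = ?u \<oplus> (?u \<oplus> (x \<oplus> ?u))" by (simp only: vd)
  also have "\<dots> = ?u \<oplus> (x \<oplus> ?u)" using u assms by simp
  finally show "?u \<oplus> x = x" using vd by simp
qed

lemma green_R_sandwich:
  assumes a: "a \<in> A" and b: "b \<in> A" and ab: "a \<odot> b = b" and ba: "b \<odot> a = a" and x: "x \<in> A"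
  shows "b \<odot> x \<odot> b = a \<odot> x \<odot> b"
proof -
  note [simp] = a b x
  have "b \<odot> (a \<odot> x) \<odot> b = a \<odot> x \<odot> b" using ba by (simp flip: mul_assoc)
  then have axb_absorbed: "a \<odot> x \<odot> b \<oplus> b = b" using absorb_right[of b "a \<odot> x"] by simp
  have "a \<odot> (b \<odot> x) \<odot> a = b \<odot> x \<odot> a" using ab by (simp flip: mul_assoc)
  then have bxa_absorbed: "a \<oplus> b \<odot> x \<odot> a = a" using absorb_left[of a "b \<odot> x"] by simp
  text \<open>Both sides equal \<open>axb + bxb\<close>.\<close>
  have "a \<odot> x \<odot> a = (a \<oplus> b \<odot> x \<odot> a) \<odot> (x \<odot> a)" using bxa_absorbed by simp
  also have "\<dots> = a \<odot> x \<odot> a \<oplus> b \<odot> x \<odot> a" by (simp add: distrib_right)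
  finally have "a \<odot> x \<odot> a \<odot> b = (a \<odot> x \<odot> a \<oplus> b \<odot> x \<odot> a) \<odot> b" by simp
  then have axb: "a \<odot> x \<odot> b = a \<odot> x \<odot> b \<oplus> b \<odot> x \<odot> b" using ab by (simp add: distrib_right)
  have "b \<odot> x \<odot> b = (a \<odot> x \<odot> b \<oplus> b) \<odot> (x \<odot> b)" using axb_absorbed by simp
  also have "\<dots> = a \<odot> x \<odot> b \<oplus> b \<odot> x \<odot> b" by (simp add: distrib_right)
  finally show ?thesis using axb by simp
qed

lemma green_R_mul_right:
  assumes a: "a \<in> A" and b: "b \<in> A" and ab: "a \<odot> b = b" and ba: "b \<odot> a = a" and x: "x \<in> A"
  shows "a \<odot> x \<odot> (b \<odot> x) = b \<odot> x"
proof -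
  note [simp] = a b x
  have bxa_eq_axa: "b \<odot> x \<odot> a = a \<odot> x \<odot> a"
    using arg_cong[OF green_R_sandwich[OF assms], of "\<lambda>z. z \<odot> a"] ba by simp
  have abx: "a \<odot> (b \<odot> y) = b \<odot> y" if "y \<in> A" for y
    using ab that by (simp flip: mul_assoc)
  have "a \<odot> x \<odot> (b \<odot> x) = a \<odot> x \<odot> a \<odot> (b \<odot> x)" using abx by simp
  also have "\<dots> = b \<odot> x \<odot> a \<odot> (b \<odot> x)"
    using arg_cong[OF bxa_eq_axa, of "\<lambda>z. z \<odot> (b \<odot> x)"] by simp
  also have "\<dots> = b \<odot> x" using abx by simp
  finally show ?thesis .
qed

lemma green_R_mul_eq:
  assumes a: "a \<in> A" and b: "b \<in> A" and ab: "a \<odot> b = b" and ba: "b \<odot> a = a" and x: "x \<in> A"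
  shows "a \<odot> x = b \<odot> x"
proof -
  note [simp] = a b x
  have "a \<odot> x = a \<odot> (x \<oplus> x \<odot> b \<odot> x)" using absorb_left by simp
  also have "\<dots> = a \<odot> x \<oplus> a \<odot> x \<odot> (b \<odot> x)" by (simp add: distrib_left)
  also have "\<dots> = a \<odot> x \<oplus> b \<odot> x" using green_R_mul_right[OF a b ab ba x] by simp
  also have "\<dots> = b \<odot> x \<odot> (a \<odot> x) \<oplus> b \<odot> x" using green_R_mul_right[OF b a ba ab x] by simp
  also have "\<dots> = b \<odot> (x \<odot> a \<odot> x \<oplus> x)" by (simp add: distrib_left)
  also have "\<dots> = b \<odot> x" using absorb_right by simp
  finally show ?thesis .
qed

lemma VD_mul_flip: "VD (A, (\<oplus>), \<lambda>x y. y \<odot> x)"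
  using absorb_left absorb_right
  by (auto simp: VD_def idem_semiring_def alg_closed_def distrib_left distrib_right)

lemma green_R_iff:
  assumes "B \<subseteq> A"
  shows "(x, y) \<in> green_R B (\<odot>) \<longleftrightarrow> x \<in> B \<and> y \<in> B \<and> (\<forall>z\<in>A. x \<odot> z = y \<odot> z)"
proof
  assume "(x, y) \<in> green_R B (\<odot>)"
  with assms show "x \<in> B \<and> y \<in> B \<and> (\<forall>z\<in>A. x \<odot> z = y \<odot> z)"
    by (auto simp: green_R_def intro: green_R_mul_eq)
next
  assume "x \<in> B \<and> y \<in> B \<and> (\<forall>z\<in>A. x \<odot> z = y \<odot> z)"
  with assms show "(x, y) \<in> green_R B (\<odot>)"
    by (auto simp: green_R_def) (metis mul_idem subsetD)+
qed

lemma congruence_green_R: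
  assumes "B \<subseteq> A" and closed: "alg_closed (B, (\<oplus>), (\<odot>))"
  shows "congruence B (\<oplus>) (\<odot>) (green_R B (\<odot>))"
proof -
  have "equiv B (green_R B (\<odot>))"
    by (rule equivI) (auto simp: green_R_iff[OF \<open>B \<subseteq> A\<close>] refl_on_def sym_def trans_def)
  moreover have "(x \<oplus> y, x' \<oplus> y') \<in> green_R B (\<odot>) \<and> (x \<odot> y, x' \<odot> y') \<in> green_R B (\<odot>)"
    if "(x, x') \<in> green_R B (\<odot>)" "(y, y') \<in> green_R B (\<odot>)" for x x' y y'
    using that closed \<open>B \<subseteq> A\<close>
    by (auto simp: green_R_iff alg_closed_def distrib_right subset_iff)
  ultimately show ?thesis by (auto simp: congruence_def)
qed

lemma congruence_green_L:
  assumes "B \<subseteq> A" and "alg_closed (B, (\<oplus>), (\<odot>))"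
  shows "congruence B (\<oplus>) (\<odot>) (green_L B (\<odot>))"
proof -
  interpret dual: VD_semiring A "(\<oplus>)" "\<lambda>x y. y \<odot> x"
    by unfold_locales (rule VD_mul_flip)
  have "congruence B (\<oplus>) (\<lambda>x y. y \<odot> x) (green_R B (\<lambda>x y. y \<odot> x))"
    using assms by (intro dual.congruence_green_R) (auto simp: alg_closed_def)
  moreover have "green_R B (\<lambda>x y. y \<odot> x) = green_L B (\<odot>)"
    by (auto simp: green_R_def green_L_def)
  ultimately show ?thesis
    by (auto simp: congruence_def)
qed

lemma semiring_laws_modulo:
  assumes "B \<subseteq> A" "alg_closed (B, (\<oplus>), (\<odot>))" "equiv B E"
    and "e \<in> semiring_laws" "range w \<subseteq> B"
  shows "(eval (\<oplus>) (\<odot>) w (fst e), eval (\<oplus>) (\<odot>) w (snd e)) \<in> E"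
proof -
  have "sat (A, (\<oplus>), (\<odot>)) e"
    using VD \<open>e \<in> semiring_laws\<close> by (auto simp: VD_def idem_semiring_iff_models models_def)
  moreover have "\<forall>i. w i \<in> A" using assms by auto
  ultimately have "eval (\<oplus>) (\<odot>) w (fst e) = eval (\<oplus>) (\<odot>) w (snd e)"
    by (auto simp: sat_def)
  moreover have "eval (\<oplus>) (\<odot>) w (snd e) \<in> B"
    using assms by (intro eval_closed)
  ultimately show ?thesis
    using \<open>equiv B E\<close> by (simp add: equiv_def refl_on_def)
qed

lemma VL_law_modulo_green_R:
  assumes "B \<subseteq> A" "alg_closed (B, (\<oplus>), (\<odot>))" "range w \<subseteq> B"
  shows "(eval (\<oplus>) (\<odot>) w (fst VL_law), eval (\<oplus>) (\<odot>) w (snd VL_law)) \<in> green_R B (\<odot>)"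
proof -
  have "w 0 \<in> A" "w 1 \<in> A" "w 0 \<in> B" "eval (\<oplus>) (\<odot>) w (snd VL_law) \<in> B"
    using assms by (auto intro: eval_closed)
  then show ?thesis
    by (simp add: green_R_def VL_law_def distrib_left distrib_right absorb_left absorb_right)
qed

lemma VR_law_modulo_green_L:
  assumes "B \<subseteq> A" "alg_closed (B, (\<oplus>), (\<odot>))" "range w \<subseteq> B"
  shows "(eval (\<oplus>) (\<odot>) w (fst VR_law), eval (\<oplus>) (\<odot>) w (snd VR_law)) \<in> green_L B (\<odot>)"
proof -
  have "w 0 \<in> A" "w 1 \<in> A" "w 0 \<in> B" "eval (\<oplus>) (\<odot>) w (snd VR_law) \<in> B"
    using assms by (auto intro: eval_closed)
  then show ?thesis
    by (simp add: green_L_def VR_law_def distrib_left distrib_right absorb_left absorb_right)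
qed

lemma eq_theory_VL_modulo_green_R:
  assumes "countable B" "alg_closed (B, (\<oplus>), (\<odot>))" "B \<subseteq> A" "e \<in> eq_theory VL" "range w \<subseteq> B"
  shows "(eval (\<oplus>) (\<odot>) w (fst e), eval (\<oplus>) (\<odot>) w (snd e)) \<in> green_R B (\<odot>)"
proof (rule eq_theory_modulo_congruence[where Laws = "insert VL_law semiring_laws"])
  show "VL N" if "models (insert VL_law semiring_laws) N" for N :: "nat alg"
    using that by (simp add: VL_iff_models)
  show cong: "congruence B (\<oplus>) (\<odot>) (green_R B (\<odot>))"
    using assms by (intro congruence_green_R)
  show "(eval (\<oplus>) (\<odot>) w' (fst e'), eval (\<oplus>) (\<odot>) w' (snd e')) \<in> green_R B (\<odot>)"
    if "e' \<in> insert VL_law semiring_laws" "range w' \<subseteq> B" for e' w'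
    using that(1)
  proof
    assume "e' = VL_law"
    with assms that(2) show ?thesis by (simp add: VL_law_modulo_green_R)
  next
    assume "e' \<in> semiring_laws"
    with assms that(2) cong show ?thesis by (simp add: semiring_laws_modulo congruence_def)
  qed
qed (simp_all add: assms)

lemma eq_theory_VR_modulo_green_L:
  assumes "countable B" "alg_closed (B, (\<oplus>), (\<odot>))" "B \<subseteq> A" "e \<in> eq_theory VR" "range w \<subseteq> B"
  shows "(eval (\<oplus>) (\<odot>) w (fst e), eval (\<oplus>) (\<odot>) w (snd e)) \<in> green_L B (\<odot>)"
proof (rule eq_theory_modulo_congruence[where Laws = "insert VR_law semiring_laws"])
  show "VR N" if "models (insert VR_law semiring_laws) N" for N :: "nat alg"
    using that by (simp add: VR_iff_models)
  show cong: "congruence B (\<oplus>) (\<odot>) (green_L B (\<odot>))"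
    using assms by (intro congruence_green_L)
  show "(eval (\<oplus>) (\<odot>) w' (fst e'), eval (\<oplus>) (\<odot>) w' (snd e')) \<in> green_L B (\<odot>)"
    if "e' \<in> insert VR_law semiring_laws" "range w' \<subseteq> B" for e' w'
    using that(1)
  proof
    assume "e' = VR_law"
    with assms that(2) show ?thesis by (simp add: VR_law_modulo_green_L)
  next
    assume "e' \<in> semiring_laws"
    with assms that(2) cong show ?thesis by (simp add: semiring_laws_modulo congruence_def)
  qed
qed (simp_all add: assms)

end

section \<open>The join\<close>

lemma VL_imp_VD: "VL S \<Longrightarrow> VD S"
proof (cases S)
  case (fields A p m)
  assume "VL S"
  then have semiring: "idem_semiring (A, p, m)"
    and law: "\<And>x y. x \<in> A \<Longrightarrow> y \<in> A \<Longrightarrow> x = p (p (m x y) x) (m x y)"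
    using fields by (auto simp: VL_def)
  have "x = p (p (m (m x y) x) x) (m (m x y) x)" if "x \<in> A" "y \<in> A" for x y
  proof -
    have "m y x \<in> A" "m (m x y) x = m x (m y x)"
      using semiring that by (auto simp: idem_semiring_def alg_closed_def)
    then show ?thesis using law[OF \<open>x \<in> A\<close> \<open>m y x \<in> A\<close>] by simp
  qed
  with semiring fields show "VD S" by (simp add: VD_def)
qed

lemma VR_imp_VD: "VR S \<Longrightarrow> VD S"
proof (cases S)
  case (fields A p m)
  assume "VR S"
  then have semiring: "idem_semiring (A, p, m)"
    and law: "\<And>x y. x \<in> A \<Longrightarrow> y \<in> A \<Longrightarrow> x = p (p (m y x) x) (m y x)"
    using fields by (auto simp: VR_def)
  have "x = p (p (m (m x y) x) x) (m (m x y) x)" if "x \<in> A" "y \<in> A" for x y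
    using law[of x "m x y"] semiring that by (auto simp: idem_semiring_def alg_closed_def)
  with semiring fields show "VD S" by (simp add: VD_def)
qed

lemma VD_laws_in_eq_theory_join: "insert VD_law semiring_laws \<subseteq> eq_theory VL \<inter> eq_theory VR"
proof -
  have "sat N e" if "VD N" "e \<in> insert VD_law semiring_laws" for N :: "nat alg" and e
    using that by (auto simp: VD_iff_models models_def)
  then show ?thesis
    unfolding eq_theory_def using VL_imp_VD VR_imp_VD by blast
qed

lemma join_VL_VR_imp_VD: "join_variety VL VR S \<Longrightarrow> VD S"
  using VD_laws_in_eq_theory_join by (auto simp: join_variety_def VD_iff_models models_def)

lemma VD_imp_join_VL_VR:
  fixes S :: "'a alg"
  assumes "VD S"
  shows "join_variety VL VR S"
proof (cases S)
  case (fields A p m)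
  interpret VD_semiring A p m
    by unfold_locales (use assms fields in simp)
  have "sat S e" if "e \<in> eq_theory VL" "e \<in> eq_theory VR" for e
    unfolding fields sat_def prod.case
  proof (intro allI impI)
    fix v :: "nat \<Rightarrow> 'a" assume "\<forall>i. v i \<in> A"
    define B where "B = range (eval p m v)"
    have "alg_closed (A, p, m)" using assms fields by (simp add: VD_def idem_semiring_def)
    with \<open>\<forall>i. v i \<in> A\<close> have B: "countable B" "alg_closed (B, p, m)" "B \<subseteq> A"
      by (auto simp: B_def alg_closed_range_eval intro: eval_closed)
    have "range v \<subseteq> B"
      unfolding B_def by (auto intro: range_eqI[of _ _ "Var _"])
    then have "(eval p m v (fst e), eval p m v (snd e)) \<in> green_R B m \<inter> green_L B m"
      using eq_theory_VL_modulo_green_R[OF B \<open>e \<in> eq_theory VL\<close> \<open>range v \<subseteq> B\<close>]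
        eq_theory_VR_modulo_green_L[OF B \<open>e \<in> eq_theory VR\<close> \<open>range v \<subseteq> B\<close>] by blast
    then show "eval p m v (fst e) = eval p m v (snd e)"
      using green_R_Int_green_L by blast
  qed
  with assms show ?thesis
    by (auto simp: join_variety_def VD_def idem_semiring_def)
qed

theorem corollary4p10:
  fixes S :: "'a alg"
  shows "VD S \<longleftrightarrow> join_variety VL VR S"
  using VD_imp_join_VL_VR join_VL_VR_imp_VD by blast

end
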